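(* If Assumptions (A1), (A2), (A3) and (A4) below hold, then $V^*_{N_p+1}(x)\le V^*_{N_p}(x)$ for all $x\in\mathtt{X}_{N_p}$, where $V^*_{N_p}(x)$ is the optimal value function of $\mathtt{P}_{N_p}(x)$ with prediction horizon length $N_p$.
   Context: Consider the uncertain linear system $x^+=Ax+Bu+w$ with $(A,B)\in\mathrm{conv}(\{(A_i,B_i),\,i\in\Gamma_p\})$, $\Gamma_p=\{1,\dots,n_p\}$, $w\in\mathsf W$ (convex polytope containing the origin in its interior), constraints $x\in\mathbb X$, $u\in\mathbb U$ (polytopes). The disturbance set is split as $\mathsf W\subseteq\overline{\mathsf W}\oplus\underline{\mathsf W}$ with $\overline{\mathsf W}=\mathrm{conv}\{w_l,\,l\in\Gamma_{\overline w}\}$ (large) and $\underline{\mathsf W}$ (small). Nominal model $z^+=A_iz+B_iv+w$, $w\in\overline{\mathsf W}$; control $u=v+K_{\mathrm{inv}}(x-z)$; $\mathsf S$ satisfies $(A_i+B_iK_{\mathrm{inv}})\mathsf S\oplus\underline{\mathsf W}\subseteq\mathsf S$; tightened sets $\mathbb Z=\mathbb X\ominus\mathsf S$, $\mathbb V=\mathbb U\ominus K_{\mathrm{inv}}\mathsf S$. $\mathtt{P}_{N_p}(x)$ is the tube-enhanced multi-stage MPC problem: a scenario tree with nodes $z_k^j$, inputs $v_k^j$, $n_d=n_pn_{\overline w}$ branches $z_{k+1}^c=A_iz_k^j+B_iv_k^j+w_l$ per node up to the robust horizon $N_r$, with $z_k^j\in\mathbb Z$, $v_k^j\in\mathbb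 V$; beyond $N_r$ one tube $\mathsf Z_k^j$ per scenario with policy $v_k^j+K_{\mathrm{pred}}z$, $(A_i+B_iK_{\mathrm{pred}})\mathsf Z_k^j\oplus\{B_iv_k^j\}\oplus\overline{\mathsf W}\subseteq\mathsf Z_{k+1}^j$, $z_{N_r}^j\in\mathsf Z_{N_r}^j\subseteq\mathbb Z$, $\mathsf Z_k^j\subseteq\mathbb Z$, $\{v_k^j\}\oplus K_{\mathrm{pred}}\mathsf Z_k^j\subseteq\mathbb V$, $\mathsf Z_{N_p}^j\subseteq\mathbb Z_f$, and $x\in\{z_0^1\}\oplus\mathsf S$. Cost: $\sum_{k=0}^{N_r-1}\sum_j\omega_k^j\ell(z_k^j,v_k^j)+\sum_{k=N_r}^{N_p-1}\max_{\tilde z_k^j\in\mathsf Z_k^j}\sum_j\omega_k^j\ell(\tilde z_k^j,v_k^j+K_{\mathrm{pred}}\tilde z_k^j)+\max\sum_jV_f(\tilde z_{N_p}^j)$. $\mathtt{X}_{N_p}$ is its feasible set. (A1) Weights: each realization $(A_i,B_i,w_l)$ has a positive weight; the root weight satisfies $0<\omega_0^1\le$ all realization weights; nodes at stages $1,\dots,N_r-1$ carry the weight of the realization producing them; tube weights are $\omega_k^j=n_d^{k-N_r}\omega_{\mathrm{tube}}$ for $k=N_r,\dots,N_p-1$ with bounded $\omega_{\mathrm{tube}}\ge$ all realization weights. (A2) $\mathsf S$ is a convex compact disturbance invariant polytope with $\mathsf S\subset\mathbb X$, $K_{\mathrm{inv}}\mathsf S\subset\mathbb U$ (and $\mathsf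 S=\{0\}$ if $\underline{\mathsf W}=\{0\}$). (A3) $\mathbb Z_f\subseteq\mathbb X\ominus\mathsf S$ is a robust positively invariant polytope containing the origin for $K_f=K_{\mathrm{pred}}$, $K_f\mathbb Z_f\subseteq\mathbb U\ominus K_{\mathrm{inv}}\mathsf S$, and for all tubes $\mathsf Z\subseteq\mathbb Z_f$, $(A_i+B_iK_f)\mathsf Z\oplus\overline{\mathsf W}\subseteq\mathsf Z^+\subseteq\mathbb Z_f$ for all $i$. (A4) $\ell$ and $V_f$ are convex, positive definite; $\ell(z,v)\ge c|z|_{\mathbb Z_f}$ for $z\in\mathbb Z\setminus\mathbb Z_f$ with $|z|_{\mathbb Z_f}=\min_{y\in\mathbb Z_f}\|z-y\|_p$, $c>0$; $\ell(z,K_fz)=0$ and $V_f(z)=0$ on $\mathbb Z_f$; $\max_{\tilde z\in\mathsf Z}\ell(\tilde z,v+K_{\mathrm{pred}}\tilde z)\ge c'|\tilde z|_{\mathbb Z_f}$ for $\mathsf Z\subseteq\mathbb Z\setminus\mathbb Z_f$ ($c'>0$), and $\max_{\tilde z\in\mathsf Z}\ell(\tilde z,K_f\tilde z)=0$, $\max_{\tilde z\in\mathsf Z}V_f(\tilde z)=0$ for $\mathsf Z\subseteq\mathbb Z_f$. *)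

theory Defs
  imports "HOL-Analysis.Analysis"
begin

definition msum :: "'a::plus set \<Rightarrow> 'a set \<Rightarrow> 'a set" where
  "msum P Q = {p + q | p q. p \<in> P \<and> q \<in> Q}"

definition pdiff :: "'a::ab_group_add set \<Rightarrow> 'a set \<Rightarrow> 'a set" where
  "pdiff P Q = {x. \<forall>q\<in>Q. x + q \<in> P}"

definition mimg :: "real^'n^'m \<Rightarrow> (real^'n) set \<Rightarrow> (real^'m) set" where
  "mimg M P = (\<lambda>y. M *v y) ` P"

text \<open>Realizations r < nd with nd = np * nw; realization r stands for the model index
  i = r div nw and the disturbance vertex index l = r mod nw.  Node j at stage k+1 of the
  tree (k+1 \<le> Nr) has parent node j div nd at stage k and is produced by realization
  j mod nd.  At stage k there are nd^k nodes; beyond Nr there are nd^Nr scenarios.\<close>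

definition Wbar :: "nat \<Rightarrow> (nat \<Rightarrow> real^'n) \<Rightarrow> (real^'n) set" where
  "Wbar nw w = convex hull (w ` {..<nw})"

text \<open>Feasibility of the decision variables (z, v, T) of the tube-enhanced multi-stage MPC
  problem P_Np(x).  Here Zt = X \<ominus> S and Vt = U \<ominus> K_inv S are the tightened sets.\<close>

definition mpc_feasible ::
  "nat \<Rightarrow> nat \<Rightarrow> (nat \<Rightarrow> real^'n^'n) \<Rightarrow> (nat \<Rightarrow> real^'m^'n) \<Rightarrow> (nat \<Rightarrow> real^'n)
   \<Rightarrow> (real^'n) set \<Rightarrow> (real^'m) set \<Rightarrow> (real^'n) set \<Rightarrow> real^'n^'m \<Rightarrow> (real^'n) set
   \<Rightarrow> nat \<Rightarrow> nat \<Rightarrow> real^'n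
   \<Rightarrow> (nat \<Rightarrow> nat \<Rightarrow> real^'n) \<Rightarrow> (nat \<Rightarrow> nat \<Rightarrow> real^'m) \<Rightarrow> (nat \<Rightarrow> nat \<Rightarrow> (real^'n) set)
   \<Rightarrow> bool" where
  "mpc_feasible np nw A B w Zt Vt S Kp Zf Nr Np x z v T \<longleftrightarrow>
     (let nd = np * nw in
      x \<in> msum {z 0 0} S \<and>
      (\<forall>k<Nr. \<forall>j<nd ^ k.
          z k j \<in> Zt \<and> v k j \<in> Vt \<and>
          (\<forall>r<nd. z (Suc k) (j * nd + r) =
               A (r div nw) *v z k j + B (r div nw) *v v k j + w (r mod nw))) \<and>
      (\<forall>j<nd ^ Nr.
          z Nr j \<in> T Nr j \<and>
          (\<forall>k\<in>{Nr..Np}. polytope (T k j) \<and> T k j \<subseteq> Zt) \<and>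
          (\<forall>k\<in>{Nr..<Np}.
              msum {v k j} (mimg Kp (T k j)) \<subseteq> Vt \<and>
              (\<forall>i<np. msum (msum (mimg (A i + B i ** Kp) (T k j)) {B i *v v k j}) (Wbar nw w)
                        \<subseteq> T (Suc k) j)) \<and>
          T Np j \<subseteq> Zf))"

definition node_weight :: "nat \<Rightarrow> (nat \<Rightarrow> real) \<Rightarrow> real \<Rightarrow> nat \<Rightarrow> nat \<Rightarrow> real" where
  "node_weight nd rho om0 k j = (if k = 0 then om0 else rho (j mod nd))"

definition mpc_cost ::
  "nat \<Rightarrow> nat \<Rightarrow> (real^'n \<Rightarrow> real^'m \<Rightarrow> real) \<Rightarrow> (real^'n \<Rightarrow> real)
   \<Rightarrow> (nat \<Rightarrow> real) \<Rightarrow> real \<Rightarrow> real \<Rightarrow> real^'n^'m \<Rightarrow> nat \<Rightarrow> nat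
   \<Rightarrow> (nat \<Rightarrow> nat \<Rightarrow> real^'n) \<Rightarrow> (nat \<Rightarrow> nat \<Rightarrow> real^'m) \<Rightarrow> (nat \<Rightarrow> nat \<Rightarrow> (real^'n) set)
   \<Rightarrow> real" where
  "mpc_cost np nw l Vf rho om0 omt Kp Nr Np z v T =
     (let nd = np * nw; M = nd ^ Nr in
       (\<Sum>k<Nr. \<Sum>j<nd ^ k. node_weight nd rho om0 k j * l (z k j) (v k j))
     + (\<Sum>k\<in>{Nr..<Np}.
          Sup {(\<Sum>j<M. (real nd ^ (k - Nr) * omt) * l (y j) (v k j + Kp *v y j)) | y.
                 \<forall>j<M. y j \<in> T k j})
     + Sup {(\<Sum>j<M. Vf (y j)) | y. \<forall>j<M. y j \<in> T Np j})"

definition mpc_value ::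
  "nat \<Rightarrow> nat \<Rightarrow> (nat \<Rightarrow> real^'n^'n) \<Rightarrow> (nat \<Rightarrow> real^'m^'n) \<Rightarrow> (nat \<Rightarrow> real^'n)
   \<Rightarrow> (real^'n) set \<Rightarrow> (real^'m) set \<Rightarrow> (real^'n) set \<Rightarrow> real^'n^'m \<Rightarrow> (real^'n) set
   \<Rightarrow> (real^'n \<Rightarrow> real^'m \<Rightarrow> real) \<Rightarrow> (real^'n \<Rightarrow> real) \<Rightarrow> (nat \<Rightarrow> real) \<Rightarrow> real \<Rightarrow> real
   \<Rightarrow> nat \<Rightarrow> nat \<Rightarrow> real^'n \<Rightarrow> real" where
  "mpc_value np nw A B w Zt Vt S Kp Zf l Vf rho om0 omt Nr Np x =
     Inf {mpc_cost np nw l Vf rho om0 omt Kp Nr Np z v T | z v T.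
            mpc_feasible np nw A B w Zt Vt S Kp Zf Nr Np x z v T}"

definition mpc_feasible_set ::
  "nat \<Rightarrow> nat \<Rightarrow> (nat \<Rightarrow> real^'n^'n) \<Rightarrow> (nat \<Rightarrow> real^'m^'n) \<Rightarrow> (nat \<Rightarrow> real^'n)
   \<Rightarrow> (real^'n) set \<Rightarrow> (real^'m) set \<Rightarrow> (real^'n) set \<Rightarrow> real^'n^'m \<Rightarrow> (real^'n) set
   \<Rightarrow> nat \<Rightarrow> nat \<Rightarrow> (real^'n) set" where
  "mpc_feasible_set np nw A B w Zt Vt S Kp Zf Nr Np =
     {x. \<exists>z v T. mpc_feasible np nw A B w Zt Vt S Kp Zf Nr Np x z v T}"

end

theory Submission
  imports Defs
begin

text \<open>A feasible solution for horizon Np extends to horizon Np + 1 at the same cost: keep the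
  tree and all tubes, apply the terminal feedback Kp at stage Np (nominal input 0), and append as
  new terminal tube a successor of the old one inside Zf, which exists by the robust invariance
  in (A3).  Because the old terminal tube lies in Zf, (A4) makes the appended stage cost and both
  terminal costs vanish.  So every cost attainable with horizon Np is attainable with Np + 1, and
  as all costs are nonnegative (the suprema are over compact tubes of continuous convex costs, hence
  genuine) the infimum cannot increase.\<close>

lemma msum_eq_empty_iff: "msum P Q = {} \<longleftrightarrow> P = {} \<or> Q = {}"
  unfolding msum_def by blast

lemma mimg_eq_empty_iff: "mimg M P = {} \<longleftrightarrow> P = {}"
  unfolding mimg_def by blast

lemma msum_singleton_zero_left: "msum {0} P = (P::'a::monoid_add set)"
  unfolding msum_def by auto

lemma msum_singleton_zero_right: "msum P {0} = (P::'a::monoid_add set)"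
  unfolding msum_def by auto

lemma mimg_mono: "P \<subseteq> Q \<Longrightarrow> mimg M P \<subseteq> mimg M Q"
  unfolding mimg_def by blast

lemma Wbar_eq_empty_iff: "Wbar nw w = {} \<longleftrightarrow> nw = 0"
  unfolding Wbar_def by (simp add: lessThan_empty_iff)

lemma bdd_above_sums_of_choices:
  fixes f :: "nat \<Rightarrow> 'a::topological_space \<Rightarrow> real"
  assumes "\<And>j. j < M \<Longrightarrow> compact (K j)" "\<And>j. j < M \<Longrightarrow> continuous_on (K j) (f j)"
  shows "bdd_above {(\<Sum>j<M. f j (y j)) | y. \<forall>j<M. y j \<in> K j}"
proof -
  have "bdd_above (f j ` K j)" if "j < M" for j
    using assms that by (intro bounded_imp_bdd_above compact_imp_bounded compact_continuous_image)
  then have "f j x \<le> Sup (f j ` K j)" if "j < M" "x \<in> K j" for j x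
    using that by (intro cSup_upper) auto
  then show ?thesis
    unfolding bdd_above_def by (intro exI[of _ "\<Sum>j<M. Sup (f j ` K j)"]) (auto intro!: sum_mono)
qed

lemma Sup_sums_of_choices_nonneg:
  fixes f :: "nat \<Rightarrow> 'a::topological_space \<Rightarrow> real"
  assumes "\<And>j. j < M \<Longrightarrow> compact (K j)" "\<And>j. j < M \<Longrightarrow> continuous_on (K j) (f j)"
    and "\<And>j. j < M \<Longrightarrow> K j \<noteq> {}" and "\<And>j x. j < M \<Longrightarrow> x \<in> K j \<Longrightarrow> 0 \<le> f j x"
  shows "0 \<le> Sup {(\<Sum>j<M. f j (y j)) | y. \<forall>j<M. y j \<in> K j}"
proof -
  obtain y where y: "\<forall>j<M. y j \<in> K j"
    using assms(3) by (intro that[of "\<lambda>j. SOME x. x \<in> K j"]) (simp add: some_in_eq)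
  have "0 \<le> (\<Sum>j<M. f j (y j))"
    using y assms(4) by (auto intro!: sum_nonneg)
  also have "\<dots> \<le> Sup {(\<Sum>j<M. f j (y j)) | y. \<forall>j<M. y j \<in> K j}"
    using y by (intro cSup_upper bdd_above_sums_of_choices assms(1,2)) auto
  finally show ?thesis .
qed

lemma Sup_sums_of_choices_eq_0:
  fixes f :: "nat \<Rightarrow> 'a \<Rightarrow> real"
  assumes "\<And>j. j < M \<Longrightarrow> K j \<noteq> {}" and "\<And>j x. j < M \<Longrightarrow> x \<in> K j \<Longrightarrow> f j x = 0"
  shows "Sup {(\<Sum>j<M. f j (y j)) | y. \<forall>j<M. y j \<in> K j} = 0"
proof -
  obtain y where y: "\<forall>j<M. y j \<in> K j"
    using assms(1) by (intro that[of "\<lambda>j. SOME x. x \<in> K j"]) (simp add: some_in_eq)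
  have sums_0: "(\<Sum>j<M. f j (y' j)) = 0" if "\<forall>j<M. y' j \<in> K j" for y'
    using that assms(2) by (intro sum.neutral) auto
  have "{(\<Sum>j<M. f j (y j)) | y. \<forall>j<M. y j \<in> K j} = {0}"
    using sums_0 y by (auto intro!: exI[of _ y])
  then show ?thesis by simp
qed

lemma continuous_on_closed_loop_cost:
  fixes l :: "'a::real_normed_vector \<Rightarrow> 'b::real_normed_vector \<Rightarrow> real"
  assumes "continuous_on UNIV (\<lambda>p. l (fst p) (snd p))" and "bounded_linear g"
  shows "continuous_on S (\<lambda>y. l y (a + g y))"
proof -
  have "continuous_on S ((\<lambda>p. l (fst p) (snd p)) \<circ> (\<lambda>y. (y, a + g y)))"
    using assms by (intro continuous_on_compose continuous_intros continuous_on_subset[OF assms(1)])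
      (auto intro: linear_continuous_on)
  then show ?thesis by (simp add: o_def)
qed

lemma mpc_feasible_tube_nonempty:
  assumes feas: "mpc_feasible np nw A B w Zt Vt S Kp Zf Nr Np x z v T"
    and np: "np \<ge> 1" and nw: "nw \<ge> 1" and j: "j < (np * nw) ^ Nr"
    and k: "Nr \<le> k" "k \<le> Np"
  shows "T k j \<noteq> {}"
  using k
proof (induction k rule: dec_induct)
  case base
  then show ?case using feas j unfolding mpc_feasible_def Let_def by auto
next
  case (step k)
  have "msum (msum (mimg (A 0 + B 0 ** Kp) (T k j)) {B 0 *v v k j}) (Wbar nw w) \<subseteq> T (Suc k) j"
    using feas j step np unfolding mpc_feasible_def Let_def by auto
  moreover have "msum (msum (mimg (A 0 + B 0 ** Kp) (T k j)) {B 0 *v v k j}) (Wbar nw w) \<noteq> {}"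
    using step nw by (simp add: msum_eq_empty_iff mimg_eq_empty_iff Wbar_eq_empty_iff)
  ultimately show ?case by blast
qed

lemma mpc_cost_nonneg:
  assumes feas: "mpc_feasible np nw A B w Zt Vt S Kp Zf Nr N x z v T"
    and np: "np \<ge> 1" and nw: "nw \<ge> 1" and NrN: "Nr \<le> N"
    and om0: "0 \<le> om0" and rho: "\<forall>r<np * nw. 0 \<le> rho r" and omt: "0 \<le> omt"
    and l_nonneg: "\<forall>z u. 0 \<le> l z u" and Vf_nonneg: "\<forall>z. 0 \<le> Vf z"
    and l_cont: "continuous_on UNIV (\<lambda>p. l (fst p) (snd p))" and Vf_cont: "continuous_on UNIV Vf"
  shows "0 \<le> mpc_cost np nw l Vf rho om0 omt Kp Nr N z v T"
proof -
  define nd where "nd = np * nw"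
  define M where "M = nd ^ Nr"
  have tube_compact: "compact (T k j)" if "j < M" "k \<in> {Nr..N}" for j k
    using feas that polytope_imp_compact unfolding mpc_feasible_def Let_def M_def nd_def by blast
  have tube_nonempty: "T k j \<noteq> {}" if "j < M" "k \<in> {Nr..N}" for j k
    using mpc_feasible_tube_nonempty[OF feas np nw] that unfolding M_def nd_def by auto
  have "0 \<le> node_weight nd rho om0 k j" for k j
    using om0 rho np nw unfolding node_weight_def nd_def by simp
  then have tree: "0 \<le> (\<Sum>k<Nr. \<Sum>j<nd ^ k. node_weight nd rho om0 k j * l (z k j) (v k j))"
    using l_nonneg by (simp add: sum_nonneg)
  have tubes: "0 \<le> (\<Sum>k\<in>{Nr..<N}.
      Sup {(\<Sum>j<M. (real nd ^ (k - Nr) * omt) * l (y j) (v k j + Kp *v y j)) | y. \<forall>j<M. y j \<in> T k j})"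
    using tube_compact tube_nonempty omt l_nonneg
    by (intro sum_nonneg Sup_sums_of_choices_nonneg continuous_intros
        continuous_on_closed_loop_cost[OF l_cont] bounded_linear_intros) auto
  have terminal: "0 \<le> Sup {(\<Sum>j<M. Vf (y j)) | y. \<forall>j<M. y j \<in> T N j}"
    using tube_compact tube_nonempty NrN Vf_nonneg
    by (intro Sup_sums_of_choices_nonneg continuous_on_subset[OF Vf_cont]) auto
  show ?thesis
    unfolding mpc_cost_def Let_def nd_def[symmetric] M_def[symmetric]
    using tree tubes terminal by linarith
qed

lemma mpc_feasible_obtain_terminal_successors:
  assumes feas: "mpc_feasible np nw A B w Zt Vt S Kp Zf Nr Np x z v T"
    and np: "np \<ge> 1" and nw: "nw \<ge> 1" and hor: "Nr \<le> Np"
    and tube: "\<forall>Z. polytope Z \<and> Z \<subseteq> Zf \<longrightarrow>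
                    (\<exists>Z'. polytope Z' \<and> Z' \<subseteq> Zf \<and>
                       (\<forall>i<np. msum (mimg (A i + B i ** Kp) Z) (Wbar nw w) \<subseteq> Z'))"
  obtains Z' where "\<And>j. j < (np * nw) ^ Nr \<Longrightarrow> polytope (Z' j) \<and> Z' j \<subseteq> Zf \<and> Z' j \<noteq> {} \<and>
                       (\<forall>i<np. msum (mimg (A i + B i ** Kp) (T Np j)) (Wbar nw w) \<subseteq> Z' j)"
proof -
  define successor where "successor j Z' \<longleftrightarrow> polytope Z' \<and> Z' \<subseteq> Zf \<and> Z' \<noteq> {} \<and>
              (\<forall>i<np. msum (mimg (A i + B i ** Kp) (T Np j)) (Wbar nw w) \<subseteq> Z')" for j Z'
  have successor_exists: "\<exists>Z'. successor j Z'" if j: "j < (np * nw) ^ Nr" for j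
  proof -
    have "polytope (T Np j) \<and> T Np j \<subseteq> Zf"
      using feas j hor unfolding mpc_feasible_def Let_def by auto
    then obtain Z' where Z': "polytope Z'" "Z' \<subseteq> Zf"
        "\<forall>i<np. msum (mimg (A i + B i ** Kp) (T Np j)) (Wbar nw w) \<subseteq> Z'"
      using tube by meson
    have "msum (mimg (A 0 + B 0 ** Kp) (T Np j)) (Wbar nw w) \<noteq> {}"
      using mpc_feasible_tube_nonempty[OF feas np nw j hor order_refl] nw
      by (simp add: msum_eq_empty_iff mimg_eq_empty_iff Wbar_eq_empty_iff)
    then have "Z' \<noteq> {}"
      using Z'(3) np by fastforce
    then show ?thesis
      using Z' unfolding successor_def by meson
  qed
  have "successor j (SOME Z'. successor j Z')" if "j < (np * nw) ^ Nr" for j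
    using successor_exists[OF that] by (rule someI_ex)
  then show ?thesis
    by (intro that[of "\<lambda>j. SOME Z'. successor j Z'"]) (simp add: successor_def)
qed

lemma mpc_feasible_extend_horizon:
  assumes feas: "mpc_feasible np nw A B w Zt Vt S Kp Zf Nr Np x z v T"
    and hor: "Nr \<le> Np" and Zf_Zt: "Zf \<subseteq> Zt" and Kp_Zf: "mimg Kp Zf \<subseteq> Vt"
    and Z': "\<And>j. j < (np * nw) ^ Nr \<Longrightarrow> polytope (Z' j) \<and> Z' j \<subseteq> Zf \<and>
               (\<forall>i<np. msum (mimg (A i + B i ** Kp) (T Np j)) (Wbar nw w) \<subseteq> Z' j)"
  shows "mpc_feasible np nw A B w Zt Vt S Kp Zf Nr (Suc Np) x z (v(Np := (\<lambda>_. 0))) (T(Suc Np := Z'))"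
proof -
  let ?v = "v(Np := (\<lambda>_. 0))" and ?T = "T(Suc Np := Z')"
  have new_stage: "msum {?v Np j} (mimg Kp (?T Np j)) \<subseteq> Vt \<and>
      (\<forall>i<np. msum (msum (mimg (A i + B i ** Kp) (?T Np j)) {B i *v ?v Np j}) (Wbar nw w)
                \<subseteq> ?T (Suc Np) j)"
    if j: "j < (np * nw) ^ Nr" for j
  proof -
    have "T Np j \<subseteq> Zf"
      using feas j hor unfolding mpc_feasible_def Let_def by auto
    then have "mimg Kp (T Np j) \<subseteq> Vt"
      using Kp_Zf mimg_mono by blast
    then show ?thesis
      using Z'[OF j] by (simp add: msum_singleton_zero_left msum_singleton_zero_right)
  qed
  have tubes: "polytope (?T k j) \<and> ?T k j \<subseteq> Zt"
    if j: "j < (np * nw) ^ Nr" and k: "k \<in> {Nr..Suc Np}" for j k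
    using feas j k Z'[OF j] Zf_Zt unfolding mpc_feasible_def Let_def
    by (cases "k = Suc Np") auto
  have stages: "msum {?v k j} (mimg Kp (?T k j)) \<subseteq> Vt \<and>
      (\<forall>i<np. msum (msum (mimg (A i + B i ** Kp) (?T k j)) {B i *v ?v k j}) (Wbar nw w)
                \<subseteq> ?T (Suc k) j)"
    if j: "j < (np * nw) ^ Nr" and k: "k \<in> {Nr..<Suc Np}" for j k
  proof (cases "k = Np")
    case True
    then show ?thesis using new_stage[OF j] by simp
  next
    case False
    then show ?thesis using feas j k unfolding mpc_feasible_def Let_def by auto
  qed
  have tree: "?v k = v k" if "k < Nr" for k
    using that hor by simp
  show ?thesis
    using feas hor tubes stages tree Z' unfolding mpc_feasible_def Let_def
    by auto
qed

lemma mpc_cost_extend_horizon: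
  assumes feas: "mpc_feasible np nw A B w Zt Vt S Kp Zf Nr Np x z v T"
    and np: "np \<ge> 1" and nw: "nw \<ge> 1" and hor: "Nr \<le> Np"
    and zero: "\<forall>z\<in>Zf. l z (Kp *v z) = 0 \<and> Vf z = 0"
    and Z': "\<And>j. j < (np * nw) ^ Nr \<Longrightarrow> Z' j \<noteq> {} \<and> Z' j \<subseteq> Zf"
  shows "mpc_cost np nw l Vf rho om0 omt Kp Nr (Suc Np) z (v(Np := (\<lambda>_. 0))) (T(Suc Np := Z')) =
         mpc_cost np nw l Vf rho om0 omt Kp Nr Np z v T"
proof -
  define nd where "nd = np * nw"
  define M where "M = nd ^ Nr"
  let ?v = "v(Np := (\<lambda>_. 0))" and ?T = "T(Suc Np := Z')"
  let ?tree = "\<lambda>v. \<Sum>k<Nr. \<Sum>j<nd ^ k. node_weight nd rho om0 k j * l (z k j) (v k j)"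
  let ?stage = "\<lambda>v T k. Sup {(\<Sum>j<M. (real nd ^ (k - Nr) * omt) * l (y j) (v k j + Kp *v y j)) | y.
                                \<forall>j<M. y j \<in> T k j}"
  let ?terminal = "\<lambda>T N. Sup {(\<Sum>j<M. Vf (y j)) | y. \<forall>j<M. y j \<in> T N j}"
  have cost: "mpc_cost np nw l Vf rho om0 omt Kp Nr N z v T =
              ?tree v + (\<Sum>k\<in>{Nr..<N}. ?stage v T k) + ?terminal T N" for N v T
    unfolding mpc_cost_def Let_def nd_def M_def ..
  have T_Np: "T Np j \<noteq> {} \<and> T Np j \<subseteq> Zf" if "j < M" for j
    using mpc_feasible_tube_nonempty[OF feas np nw _ hor order_refl] feas that hor
    unfolding mpc_feasible_def Let_def M_def nd_def by auto
  have "?tree ?v = ?tree v"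
    using hor by (intro sum.cong) auto
  moreover have "(\<Sum>k\<in>{Nr..<Np}. ?stage ?v ?T k) = (\<Sum>k\<in>{Nr..<Np}. ?stage v T k)"
    by (intro sum.cong) auto
  moreover have "?stage ?v ?T Np = 0"
    using T_Np zero by (intro Sup_sums_of_choices_eq_0) auto
  moreover have "?terminal ?T (Suc Np) = 0"
    using Z' zero unfolding M_def nd_def by (intro Sup_sums_of_choices_eq_0) auto
  moreover have "?terminal T Np = 0"
    using T_Np zero by (intro Sup_sums_of_choices_eq_0) blast+
  ultimately show ?thesis
    using hor by (simp add: cost sum.atLeastLessThan_Suc)
qed

lemma mpc_value_Suc_horizon_le:
  assumes np: "np \<ge> 1" and nw: "nw \<ge> 1" and hor: "Nr \<le> Np"
    and Zf_Zt: "Zf \<subseteq> Zt" and Kp_Zf: "mimg Kp Zf \<subseteq> Vt"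
    and tube: "\<forall>Z. polytope Z \<and> Z \<subseteq> Zf \<longrightarrow>
                    (\<exists>Z'. polytope Z' \<and> Z' \<subseteq> Zf \<and>
                       (\<forall>i<np. msum (mimg (A i + B i ** Kp) Z) (Wbar nw w) \<subseteq> Z'))"
    and zero: "\<forall>z\<in>Zf. l z (Kp *v z) = 0 \<and> Vf z = 0"
    and om0: "0 \<le> om0" and rho: "\<forall>r<np * nw. 0 \<le> rho r" and omt: "0 \<le> omt"
    and l_nonneg: "\<forall>z u. 0 \<le> l z u" and Vf_nonneg: "\<forall>z. 0 \<le> Vf z"
    and l_cont: "continuous_on UNIV (\<lambda>p. l (fst p) (snd p))" and Vf_cont: "continuous_on UNIV Vf"
    and x: "x \<in> mpc_feasible_set np nw A B w Zt Vt S Kp Zf Nr Np"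
  shows "mpc_value np nw A B w Zt Vt S Kp Zf l Vf rho om0 omt Nr (Suc Np) x
         \<le> mpc_value np nw A B w Zt Vt S Kp Zf l Vf rho om0 omt Nr Np x"
proof -
  let ?costs = "\<lambda>N. {mpc_cost np nw l Vf rho om0 omt Kp Nr N z v T | z v T.
                       mpc_feasible np nw A B w Zt Vt S Kp Zf Nr N x z v T}"
  have "?costs Np \<noteq> {}"
    using x unfolding mpc_feasible_set_def by blast
  moreover have "bdd_below (?costs (Suc Np))"
    using mpc_cost_nonneg[OF _ np nw _ om0 rho omt l_nonneg Vf_nonneg l_cont Vf_cont] hor
    unfolding bdd_below_def by fastforce
  moreover have "\<exists>c'\<in>?costs (Suc Np). c' \<le> c" if c_cost: "c \<in> ?costs Np" for c
  proof -
    obtain z v T where feas: "mpc_feasible np nw A B w Zt Vt S Kp Zf Nr Np x z v T"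
      and c: "c = mpc_cost np nw l Vf rho om0 omt Kp Nr Np z v T"
      using c_cost by blast
    obtain Z' where Z': "\<And>j. j < (np * nw) ^ Nr \<Longrightarrow> polytope (Z' j) \<and> Z' j \<subseteq> Zf \<and> Z' j \<noteq> {} \<and>
        (\<forall>i<np. msum (mimg (A i + B i ** Kp) (T Np j)) (Wbar nw w) \<subseteq> Z' j)"
      using mpc_feasible_obtain_terminal_successors[OF feas np nw hor tube] by blast
    have "mpc_feasible np nw A B w Zt Vt S Kp Zf Nr (Suc Np) x z (v(Np := (\<lambda>_. 0))) (T(Suc Np := Z'))"
      using Z' by (intro mpc_feasible_extend_horizon[OF feas hor Zf_Zt Kp_Zf]) blast
    moreover have "mpc_cost np nw l Vf rho om0 omt Kp Nr (Suc Np) z (v(Np := (\<lambda>_. 0))) (T(Suc Np := Z'))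
                   = c"
      unfolding c using Z'
      by (intro mpc_cost_extend_horizon[where l = l and Vf = Vf, OF feas np nw hor zero]) blast
    ultimately show ?thesis
      by fastforce
  qed
  ultimately show ?thesis
    unfolding mpc_value_def by (rule cInf_mono)
qed

theorem lemma3:
  fixes A :: "nat \<Rightarrow> real^'n^'n" and B :: "nat \<Rightarrow> real^'m^'n"
    and w :: "nat \<Rightarrow> real^'n"
    and W Wsmall X S Zf :: "(real^'n) set" and U :: "(real^'m) set"
    and Kinv Kp :: "real^'n^'m"
    and l :: "real^'n \<Rightarrow> real^'m \<Rightarrow> real" and Vf :: "real^'n \<Rightarrow> real"
    and rho :: "nat \<Rightarrow> real" and om0 omt :: real
    and np nw Nr Np :: nat and x :: "real^'n"
  assumes np: "np \<ge> 1" and nw: "nw \<ge> 1"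
    and W: "polytope W" "0 \<in> interior W"
    and Wsplit: "W \<subseteq> msum (Wbar nw w) Wsmall"
    and XU: "polytope X" "polytope U"
    and S_inv: "\<forall>i<np. msum (mimg (A i + B i ** Kinv) S) Wsmall \<subseteq> S"
    and horizon: "Nr \<le> Np"
    \<comment> \<open>(A1) weights\<close>
    and A1_rho: "\<forall>r<np * nw. rho r > 0"
    and A1_root: "0 < om0" "\<forall>r<np * nw. om0 \<le> rho r"
    and A1_tube: "\<forall>r<np * nw. rho r \<le> omt"
    \<comment> \<open>(A2)\<close>
    and A2: "polytope S" "S \<subseteq> X" "mimg Kinv S \<subseteq> U"
            "Wsmall = {0} \<Longrightarrow> S = {0}"
    \<comment> \<open>(A3)\<close>
    and A3_Zf: "polytope Zf" "0 \<in> Zf" "Zf \<subseteq> pdiff X S"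
    and A3_rpi: "\<forall>i<np. msum (mimg (A i + B i ** Kp) Zf) (Wbar nw w) \<subseteq> Zf"
    and A3_input: "mimg Kp Zf \<subseteq> pdiff U (mimg Kinv S)"
    and A3_tube: "\<forall>Z. polytope Z \<and> Z \<subseteq> Zf \<longrightarrow>
                    (\<exists>Z'. polytope Z' \<and> Z' \<subseteq> Zf \<and>
                       (\<forall>i<np. msum (mimg (A i + B i ** Kp) Z) (Wbar nw w) \<subseteq> Z'))"
    \<comment> \<open>(A4)\<close>
    and A4_convex: "convex_on UNIV (\<lambda>p. l (fst p) (snd p))" "convex_on UNIV Vf"
    and A4_nonneg: "\<forall>z u. 0 \<le> l z u" "\<forall>z. 0 \<le> Vf z"
    and A4_lower: "\<exists>c>0. \<forall>z\<in>pdiff X S - Zf. \<forall>u. l z u \<ge> c * infdist z Zf"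
    and A4_zero: "\<forall>z\<in>Zf. l z (Kp *v z) = 0 \<and> Vf z = 0"
    and A4_tube_lower: "\<exists>c'>0. \<forall>Z u. polytope Z \<and> Z \<noteq> {} \<and> Z \<subseteq> pdiff X S - Zf \<longrightarrow>
                          (\<forall>zt\<in>Z. Sup ((\<lambda>y. l y (u + Kp *v y)) ` Z) \<ge> c' * infdist zt Zf)"
    and A4_tube_zero: "\<forall>Z. polytope Z \<and> Z \<noteq> {} \<and> Z \<subseteq> Zf \<longrightarrow>
                          Sup ((\<lambda>y. l y (Kp *v y)) ` Z) = 0 \<and> Sup (Vf ` Z) = 0"
    and x: "x \<in> mpc_feasible_set np nw A B w (pdiff X S) (pdiff U (mimg Kinv S)) S Kp Zf Nr Np"
  shows "mpc_value np nw A B w (pdiff X S) (pdiff U (mimg Kinv S)) S Kp Zf l Vf rho om0 omt Nr (Suc Np) x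
         \<le> mpc_value np nw A B w (pdiff X S) (pdiff U (mimg Kinv S)) S Kp Zf l Vf rho om0 omt Nr Np x"
proof -
  have "0 < np * nw"
    using np nw by simp
  then have omt: "0 \<le> omt"
    using A1_rho A1_tube by (meson less_le_trans less_imp_le)
  have om0: "0 \<le> om0" and rho: "\<forall>r<np * nw. 0 \<le> rho r"
    using A1_root(1) A1_rho by (auto intro: less_imp_le)
  have l_cont: "continuous_on UNIV (\<lambda>p. l (fst p) (snd p))"
    and Vf_cont: "continuous_on UNIV Vf"
    using A4_convex by (auto intro: convex_on_continuous)
  show ?thesis
    using np nw horizon A3_Zf(3) A3_input A3_tube A4_zero om0 rho omt A4_nonneg l_cont Vf_cont x
    by (rule mpc_value_Suc_horizon_le)
qed

end
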